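(* Let $G$ be a finite group and $\mathcal{P}$ a prime ideal of $\mathrm{Gh}(\underline{A}_G)$ with $\mathcal{P}(G/e)=(0)\subseteq\mathbb{Z}$. For $I\le G$ let $p_I\ge0$ be the integer with $\mathcal{P}(G/G)=\widetilde{A}(G)\cap\prod_{I\le G}p_I\mathbb{Z}$, and set $\mathscr{F}(\mathcal{P})=\{I\le G: p_I\ne1\}$ and $\mathscr{F}_0=\{I\le G:p_I=0\}$. Then $\mathscr{F}(\mathcal{P})=\mathscr{F}_0$ and $\mathcal{P}=\mathcal{P}_{\mathscr{F}(\mathcal{P}),0}$.
   Context: For $H\le G$, $\widetilde{A}(H)$ is the subring of $\prod_{I\le H}\mathbb{Z}$ of tuples $(a_I)_{I\le H}$ with $a_{hIh^{-1}}=a_I$ for $h\in H$ (so $\widetilde{A}(e)=\mathbb{Z}$). $\mathrm{Gh}(\underline{A}_G)$ is the $G$-Tambara functor with $\mathrm{Gh}(\underline{A}_G)(G/H)=\widetilde{A}(H)$ and, for $H\le K$, $g\in G$, $I^g=g^{-1}Ig$: $\mathrm{res}^K_H(b)_L=b_L$; $\mathrm{tr}^K_H(a)_I=\sum_{kH\in K/H,\ I^k\le H}a_{I^k}$; $\mathrm{nm}^K_H(a)_I=\prod_{IgH\in I\backslash K/H}a_{I^g\cap H}$; $c_{g,H}(a)_J=a_{J^g}$ for $J\le gHg^{-1}$. For a set $\mathscr{F}$ of subgroups closed under conjugation and $p$ a prime or $0$, $\mathcal{P}_{\mathscr{F},p}(G/H)=\widetilde{A}(H)\cap\prod_{I\le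 H}\delta(I)\mathbb{Z}$ where $\delta(I)=p$ if $I\in\mathscr{F}$ and $1$ otherwise. A Tambara ideal is a collection of ideals $\mathcal{I}(G/H)$ closed under all restrictions, transfers, norms and conjugations; it is prime (Nakaoka) if it is not everything and whenever $a\in T(G/K_1)$, $b\in T(G/K_2)$ satisfy $\big(\mathrm{nm}^L_{g_1H_1g_1^{-1}}c_{g_1,H_1}\mathrm{res}^{K_1}_{H_1}(a)\big)\big(\mathrm{nm}^L_{g_2H_2g_2^{-1}}c_{g_2,H_2}\mathrm{res}^{K_2}_{H_2}(b)\big)\in\mathcal{I}(G/L)$ for all $L,H_1,H_2\le G$, $g_1,g_2\in G$ with $H_i\le K_i$, $g_iH_ig_i^{-1}\le L$, then $a\in\mathcal{I}(G/K_1)$ or $b\in\mathcal{I}(G/K_2)$. *)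

theory Defs
  imports "HOL-Algebra.Coset"
begin

definition conjset :: "('a, 'b) monoid_scheme \<Rightarrow> 'a \<Rightarrow> 'a set \<Rightarrow> 'a set" where
  "conjset G g I = (\<lambda>x. g \<otimes>\<^bsub>G\<^esub> x \<otimes>\<^bsub>G\<^esub> inv\<^bsub>G\<^esub> g) ` I"

definition upc :: "('a, 'b) monoid_scheme \<Rightarrow> 'a set \<Rightarrow> 'a \<Rightarrow> 'a set" where
  "upc G I g = conjset G (inv\<^bsub>G\<^esub> g) I"

definition isub :: "('a, 'b) monoid_scheme \<Rightarrow> 'a set \<Rightarrow> 'a set \<Rightarrow> bool" where
  "isub G I H \<longleftrightarrow> subgroup I G \<and> I \<subseteq> H"

text \<open>The ring A~(H): H-conjugation invariant integer tuples indexed by subgroups I \<le> H,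
  encoded as functions on subsets that vanish outside the index set.
  Ring operations are pointwise.\<close>
definition Atil :: "('a, 'b) monoid_scheme \<Rightarrow> 'a set \<Rightarrow> ('a set \<Rightarrow> int) set" where
  "Atil G H = {a. (\<forall>I. \<not> isub G I H \<longrightarrow> a I = 0) \<and>
       (\<forall>I h. isub G I H \<and> h \<in> H \<longrightarrow> a (conjset G h I) = a I)}"

definition tideal :: "('a, 'b) monoid_scheme \<Rightarrow> 'a set \<Rightarrow> ('a set \<Rightarrow> int) set \<Rightarrow> bool" where
  "tideal G H J \<longleftrightarrow> J \<subseteq> Atil G H \<and> (\<lambda>I. 0) \<in> J \<and>
     (\<forall>a\<in>J. \<forall>b\<in>J. (\<lambda>I. a I + b I) \<in> J) \<and>
     (\<forall>a\<in>J. (\<lambda>I. - a I) \<in> J) \<and>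
     (\<forall>a\<in>J. \<forall>r\<in>Atil G H. (\<lambda>I. r I * a I) \<in> J)"

definition resG :: "('a, 'b) monoid_scheme \<Rightarrow> 'a set \<Rightarrow> 'a set \<Rightarrow> ('a set \<Rightarrow> int) \<Rightarrow> ('a set \<Rightarrow> int)" where
  "resG G K H b = (\<lambda>L. if isub G L H then b L else 0)"

definition lcosets :: "('a, 'b) monoid_scheme \<Rightarrow> 'a set \<Rightarrow> 'a set \<Rightarrow> 'a set set" where
  "lcosets G K H = {k <#\<^bsub>G\<^esub> H | k. k \<in> K}"

definition trG :: "('a, 'b) monoid_scheme \<Rightarrow> 'a set \<Rightarrow> 'a set \<Rightarrow> ('a set \<Rightarrow> int) \<Rightarrow> ('a set \<Rightarrow> int)" where
  "trG G K H a = (\<lambda>I. if isub G I K then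
      (\<Sum>C\<in>lcosets G K H. let k = (SOME k. k \<in> C) in
          if upc G I k \<subseteq> H then a (upc G I k) else 0)
    else 0)"

definition dcosets :: "('a, 'b) monoid_scheme \<Rightarrow> 'a set \<Rightarrow> 'a set \<Rightarrow> 'a set \<Rightarrow> 'a set set" where
  "dcosets G I K H = {I <#>\<^bsub>G\<^esub> (g <#\<^bsub>G\<^esub> H) | g. g \<in> K}"

definition nmG :: "('a, 'b) monoid_scheme \<Rightarrow> 'a set \<Rightarrow> 'a set \<Rightarrow> ('a set \<Rightarrow> int) \<Rightarrow> ('a set \<Rightarrow> int)" where
  "nmG G K H a = (\<lambda>I. if isub G I K then
      (\<Prod>D\<in>dcosets G I K H. let g = (SOME g. g \<in> D) in a (upc G I g \<inter> H))
    else 0)"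

definition cjG :: "('a, 'b) monoid_scheme \<Rightarrow> 'a \<Rightarrow> 'a set \<Rightarrow> ('a set \<Rightarrow> int) \<Rightarrow> ('a set \<Rightarrow> int)" where
  "cjG G g H a = (\<lambda>J. if isub G J (conjset G g H) then a (upc G J g) else 0)"

text \<open>Tambara ideals of Gh(A_G), indexed by subgroups H (standing for G/H).\<close>
definition tambara_ideal :: "('a, 'b) monoid_scheme \<Rightarrow> ('a set \<Rightarrow> ('a set \<Rightarrow> int) set) \<Rightarrow> bool" where
  "tambara_ideal G P \<longleftrightarrow>
    (\<forall>H. subgroup H G \<longrightarrow> tideal G H (P H)) \<and>
    (\<forall>H K. subgroup H G \<and> subgroup K G \<and> H \<subseteq> K \<longrightarrow>
        (\<forall>b\<in>P K. resG G K H b \<in> P H) \<and>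
        (\<forall>a\<in>P H. trG G K H a \<in> P K) \<and>
        (\<forall>a\<in>P H. nmG G K H a \<in> P K)) \<and>
    (\<forall>g\<in>carrier G. \<forall>H. subgroup H G \<longrightarrow> (\<forall>a\<in>P H. cjG G g H a \<in> P (conjset G g H)))"

definition prime_tideal :: "('a, 'b) monoid_scheme \<Rightarrow> ('a set \<Rightarrow> ('a set \<Rightarrow> int) set) \<Rightarrow> bool" where
  "prime_tideal G P \<longleftrightarrow> tambara_ideal G P \<and>
    (\<exists>H. subgroup H G \<and> P H \<noteq> Atil G H) \<and>
    (\<forall>K1 K2 a b. subgroup K1 G \<longrightarrow> subgroup K2 G \<longrightarrow> a \<in> Atil G K1 \<longrightarrow> b \<in> Atil G K2 \<longrightarrow>
       (\<forall>L H1 H2 g1 g2. subgroup L G \<longrightarrow> subgroup H1 G \<longrightarrow> subgroup H2 G \<longrightarrow>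
          g1 \<in> carrier G \<longrightarrow> g2 \<in> carrier G \<longrightarrow> H1 \<subseteq> K1 \<longrightarrow> H2 \<subseteq> K2 \<longrightarrow>
          conjset G g1 H1 \<subseteq> L \<longrightarrow> conjset G g2 H2 \<subseteq> L \<longrightarrow>
          (\<lambda>I. nmG G L (conjset G g1 H1) (cjG G g1 H1 (resG G K1 H1 a)) I *
               nmG G L (conjset G g2 H2) (cjG G g2 H2 (resG G K2 H2 b)) I) \<in> P L)
       \<longrightarrow> a \<in> P K1 \<or> b \<in> P K2)"

definition Pideal :: "('a, 'b) monoid_scheme \<Rightarrow> 'a set set \<Rightarrow> int \<Rightarrow> 'a set \<Rightarrow> ('a set \<Rightarrow> int) set" where
  "Pideal G F p H = {a \<in> Atil G H. \<forall>I. isub G I H \<longrightarrow> (if I \<in> F then p else 1) dvd a I}"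

definition pI :: "('a, 'b) monoid_scheme \<Rightarrow> ('a set \<Rightarrow> ('a set \<Rightarrow> int) set) \<Rightarrow> 'a set \<Rightarrow> int" where
  "pI G P I = Gcd {a I | a. a \<in> P (carrier G)}"

end

(*
  Since P(G/e) = 0, primality applied to a and to the constant n on G/e shows that P is
  saturated: if n * a lies in P with n \<noteq> 0, then so does a.  Indeed every product in the
  primality condition is a multiple of a norm of n * a, because |J\L/X| \<le> |J\L/e| for the
  numbers of double cosets.

  Saturation turns any element of P(G/G) with nonzero I-coordinate into the indicator of the
  conjugacy class of I, so p_I = 1 if such an element exists and p_I = 0 otherwise.  An element
  of P(G/H) with nonzero I-coordinate yields, after multiplying its restriction with the
  indicator of I and dividing by that coordinate, the indicator of I in P(G/I); its transfer to
  G/G has positive I-coordinate.  So all elements of P(G/H) vanish on {I : p_I = 0}, and every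
  such tuple lies in P(G/H), being its own product with the restriction of the indicator of
  {I : p_I = 1}.
*)

theory Submission
  imports Defs "HOL-Algebra.Group_Action"
begin

lemma nmG_scale: "nmG G K H (\<lambda>I. n * f I) J = n ^ card (dcosets G J K H) * nmG G K H f J"
  by (simp add: nmG_def Let_def prod.distrib)

context group begin

lemma conjset_eq_cosets: "conjset G g J = g <# J #> inv g"
  unfolding conjset_def l_coset_def r_coset_def by auto

lemma subgroup_conjset: "subgroup J G \<Longrightarrow> g \<in> carrier G \<Longrightarrow> subgroup (conjset G g J) G"
  by (simp add: conjset_eq_cosets subgroup_conjugation_is_surj2)

lemma conjset_conjset:
  assumes "J \<subseteq> carrier G" "g \<in> carrier G" "h \<in> carrier G"
  shows "conjset G g (conjset G h J) = conjset G (g \<otimes> h) J"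
  using assms
  by (simp add: conjset_eq_cosets coset_assoc l_coset_subset_G lcos_m_assoc coset_mult_assoc
      inv_mult_group)

lemma conjset_one: "J \<subseteq> carrier G \<Longrightarrow> conjset G \<one> J = J"
  by (simp add: conjset_eq_cosets lcos_mult_one)

lemma conjset_inv_conjset:
  "J \<subseteq> carrier G \<Longrightarrow> g \<in> carrier G \<Longrightarrow> conjset G (inv g) (conjset G g J) = J"
  by (simp add: conjset_conjset conjset_one)

lemma conjset_self: "subgroup J G \<Longrightarrow> h \<in> J \<Longrightarrow> conjset G h J = J"
  by (simp add: conjset_eq_cosets coset_join2 coset_join3 subgroup.mem_carrier
      subgroup.m_inv_closed)

lemma isub_conjset:
  assumes "isub G J L" "subgroup L G" "h \<in> L"
  shows "isub G (conjset G h J) L"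
proof -
  have "conjset G h J \<subseteq> conjset G h L"
    using assms(1) unfolding isub_def conjset_def by blast
  then show ?thesis
    using assms subgroup_conjset conjset_self subgroup.mem_carrier unfolding isub_def by metis
qed

lemma isub_carrier_iff: "isub G I (carrier G) \<longleftrightarrow> subgroup I G"
  unfolding isub_def using subgroup.subset by blast

lemma conjset_dcoset:
  assumes "J \<subseteq> carrier G" "X \<subseteq> carrier G" "h \<in> carrier G" "g \<in> carrier G"
  shows "conjset G h J <#> (g <# X) = h <# (J <#> ((inv h \<otimes> g) <# X))"
proof -
  have "conjset G h J = {h} <#> J <#> {inv h}"
    unfolding conjset_def set_mult_def by auto
  then have "conjset G h J <#> (g <# X) = {h} <#> J <#> {inv h} <#> ({g} <#> X)"
    by (simp add: l_coset_eq_set_mult)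
  also have "\<dots> = {h} <#> (J <#> (({inv h} <#> {g}) <#> X))"
    using assms by (simp add: set_mult_assoc set_mult_closed)
  also have "{inv h} <#> {g} = {inv h \<otimes> g}" by (simp add: set_mult_def)
  finally show ?thesis by (simp add: l_coset_eq_set_mult)
qed

lemma dcosets_conjset:
  assumes L: "subgroup L G" and J: "J \<subseteq> carrier G" and X: "X \<subseteq> carrier G" and h: "h \<in> L"
  shows "dcosets G (conjset G h J) L X = (\<lambda>D. h <# D) ` dcosets G J L X"
proof -
  have hc: "h \<in> carrier G" using subgroup.mem_carrier[OF L h] .
  have "conjset G h J <#> (g <# X) \<in> (\<lambda>D. h <# D) ` dcosets G J L X" if g: "g \<in> L" for g
  proof -
    have "inv h \<otimes> g \<in> L" using L g h by (simp add: subgroup.m_closed subgroup.m_inv_closed)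
    then show ?thesis
      using conjset_dcoset[OF J X hc] subgroup.mem_carrier[OF L g] unfolding dcosets_def by blast
  qed
  moreover have "h <# (J <#> (g <# X)) \<in> dcosets G (conjset G h J) L X" if g: "g \<in> L" for g
  proof -
    have "h \<otimes> g \<in> L" using L g h by (simp add: subgroup.m_closed)
    moreover have "inv h \<otimes> (h \<otimes> g) = g"
      using hc subgroup.mem_carrier[OF L g] by (simp add: m_assoc[symmetric])
    ultimately show ?thesis
      using conjset_dcoset[OF J X hc, of "h \<otimes> g"] hc subgroup.mem_carrier[OF L g]
      unfolding dcosets_def by auto
  qed
  ultimately show ?thesis unfolding dcosets_def by blast
qed

lemma dcoset_subset_carrier:
  assumes "subgroup L G" "J \<subseteq> carrier G" "X \<subseteq> carrier G" "D \<in> dcosets G J L X"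
  shows "D \<subseteq> carrier G"
proof -
  obtain g where "g \<in> L" "D = J <#> (g <# X)" using assms(4) by (auto simp: dcosets_def)
  moreover have "g \<in> carrier G" using subgroup.mem_carrier[OF assms(1)] \<open>g \<in> L\<close> .
  ultimately show ?thesis using assms(2,3) by (simp add: set_mult_closed l_coset_subset_G)
qed

lemma finite_dcosets: "finite (carrier G) \<Longrightarrow> subgroup L G \<Longrightarrow> finite (dcosets G J L X)"
proof -
  assume "finite (carrier G)" "subgroup L G"
  then have "finite L" using subgroup.subset finite_subset by blast
  moreover have "dcosets G J L X = (\<lambda>g. J <#> (g <# X)) ` L" by (auto simp: dcosets_def)
  ultimately show ?thesis by simp
qed

lemma card_dcosets_conjset:
  assumes L: "subgroup L G" and J: "J \<subseteq> carrier G" and X: "X \<subseteq> carrier G" and h: "h \<in> L"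
  shows "card (dcosets G (conjset G h J) L X) = card (dcosets G J L X)"
proof -
  have hc: "h \<in> carrier G" using subgroup.mem_carrier[OF L h] .
  have "inj_on (\<lambda>D. h <# D) (dcosets G J L X)"
  proof (rule inj_onI)
    fix D1 D2 assume D: "D1 \<in> dcosets G J L X" "D2 \<in> dcosets G J L X" "h <# D1 = h <# D2"
    then have "inv h <# (h <# D1) = inv h <# (h <# D2)" by simp
    then show "D1 = D2"
      using dcoset_subset_carrier[OF L J X D(1)] dcoset_subset_carrier[OF L J X D(2)] hc
      by (simp add: lcos_m_assoc lcos_mult_one)
  qed
  then show ?thesis using dcosets_conjset[OF L J X h] by (simp add: card_image)
qed

lemma card_dcosets_le:
  assumes fin: "finite (carrier G)" and L: "subgroup L G" and J: "J \<subseteq> carrier G"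
    and X: "X \<subseteq> carrier G"
  shows "card (dcosets G J L X) \<le> card (dcosets G J L {\<one>})"
proof -
  have "J <#> (g <# X) = (J <#> (g <# {\<one>})) <#> X" if "g \<in> L" for g
  proof -
    have "g \<in> carrier G" using subgroup.mem_carrier[OF L that] .
    moreover from this have "g <# {\<one>} = {g}" by (simp add: l_coset_def)
    ultimately show ?thesis using J X by (simp add: set_mult_assoc l_coset_eq_set_mult)
  qed
  then have "dcosets G J L X = (\<lambda>D. D <#> X) ` dcosets G J L {\<one>}"
    unfolding dcosets_def by (auto simp: image_iff)
  then show ?thesis using finite_dcosets[OF fin L] card_image_le by metis
qed

lemma some_dcoset_in_carrier:
  assumes "subgroup L G" "subgroup J G" "subgroup X G" "D \<in> dcosets G J L X"
  shows "(SOME k. k \<in> D) \<in> carrier G"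
proof -
  obtain g where g: "g \<in> L" "D = J <#> (g <# X)" using assms(4) by (auto simp: dcosets_def)
  have "\<one> \<otimes> (g \<otimes> \<one>) \<in> D" unfolding g(2) set_mult_def l_coset_def
    using subgroup.one_closed assms(2,3) by blast
  then have "(SOME k. k \<in> D) \<in> D" by (rule someI)
  moreover have "D \<subseteq> carrier G"
    using dcoset_subset_carrier[OF assms(1) _ _ assms(4)] assms(2,3) subgroup.subset by blast
  ultimately show ?thesis by blast
qed

lemma nmG_trivial:
  assumes "subgroup L G" "subgroup J G"
  shows "nmG G L {\<one>} f J = (if isub G J L then f {\<one>} ^ card (dcosets G J L {\<one>}) else 0)"
proof -
  have "upc G J k \<inter> {\<one>} = {\<one>}" if "k \<in> carrier G" for k
    using that subgroup.one_closed[OF assms(2)]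
    by (force simp: upc_def conjset_def intro: rev_image_eqI[of \<one>])
  then show ?thesis
    using some_dcoset_in_carrier[OF assms(1,2) triv_subgroup] unfolding nmG_def Let_def by simp
qed

lemma nmG_mult_nmG_trivial:
  assumes fin: "finite (carrier G)" and L: "subgroup L G" and X: "X \<subseteq> carrier G"
    and c: "c {\<one>} = n"
  shows "\<exists>r\<in>Atil G L.
    (\<lambda>J. nmG G L X f J * nmG G L {\<one>} c J) = (\<lambda>J. r J * nmG G L X (\<lambda>I. n * f I) J)"
proof
  define r where "r J = (if isub G J L
      then n ^ (card (dcosets G J L {\<one>}) - card (dcosets G J L X)) else 0)" for J
  have "r (conjset G h J) = r J" if J: "isub G J L" and h: "h \<in> L" for J h
  proof -
    have "J \<subseteq> carrier G" using J subgroup.subset unfolding isub_def by blast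
    then show ?thesis
      unfolding r_def using isub_conjset[OF J L h] card_dcosets_conjset[OF L _ _ h] X J by simp
  qed
  then show "r \<in> Atil G L" unfolding Atil_def r_def by auto
  show "(\<lambda>J. nmG G L X f J * nmG G L {\<one>} c J) = (\<lambda>J. r J * nmG G L X (\<lambda>I. n * f I) J)"
  proof
    fix J
    show "nmG G L X f J * nmG G L {\<one>} c J = r J * nmG G L X (\<lambda>I. n * f I) J"
    proof (cases "isub G J L")
      case True
      then have J: "subgroup J G" unfolding isub_def by blast
      have "card (dcosets G J L X) \<le> card (dcosets G J L {\<one>})"
        using card_dcosets_le[OF fin L subgroup.subset[OF J] X] .
      then have "n ^ card (dcosets G J L {\<one>})
          = n ^ (card (dcosets G J L {\<one>}) - card (dcosets G J L X)) * n ^ card (dcosets G J L X)"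
        by (metis le_add_diff_inverse2 power_add)
      then show ?thesis using True nmG_trivial[OF L J] c by (simp add: r_def nmG_scale)
    qed (simp add: r_def nmG_def)
  qed
qed

lemma trG_at_self_pos:
  assumes fin: "finite (carrier G)" and K: "subgroup K G" and I: "isub G I K"
    and nonneg: "\<And>J. 0 \<le> a J" and pos: "0 < a I"
  shows "0 < trG G K I a I"
proof -
  define t where "t C = (let k = (SOME k. k \<in> C) in
      if upc G I k \<subseteq> I then a (upc G I k) else 0)" for C
  have Is: "subgroup I G" using I unfolding isub_def by blast
  have "finite K" using fin K subgroup.subset finite_subset by blast
  moreover have "lcosets G K I = (\<lambda>k. k <# I) ` K" by (auto simp: lcosets_def)
  ultimately have fl: "finite (lcosets G K I)" by simp
  have "I \<in> lcosets G K I"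
    unfolding lcosets_def using lcos_mult_one[OF subgroup.subset[OF Is]] subgroup.one_closed[OF K]
    by force
  moreover have "t I = a I"
  proof -
    have "(SOME k. k \<in> I) \<in> I" using subgroup.one_closed[OF Is] by (rule someI)
    then show ?thesis
      unfolding t_def Let_def upc_def using conjset_self[OF Is] subgroup.m_inv_closed[OF Is] by simp
  qed
  moreover have "0 \<le> t C" for C unfolding t_def Let_def using nonneg by simp
  ultimately have "0 < sum t (lcosets G K I)"
    using pos fl member_le_sum[of I "lcosets G K I" t] by simp
  then show ?thesis unfolding trG_def t_def using I by simp
qed

end

definition conj_indicator :: "('a, 'b) monoid_scheme \<Rightarrow> 'a set \<Rightarrow> 'a set \<Rightarrow> 'a set \<Rightarrow> int" where
  "conj_indicator G H I = (\<lambda>J. if \<exists>h\<in>H. J = conjset G h I then 1 else 0)"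

context group begin

lemma conjugate_conjset_iff:
  assumes H: "subgroup H G" and I: "I \<subseteq> carrier G" and J: "J \<subseteq> carrier G" and h: "h \<in> H"
  shows "(\<exists>g\<in>H. conjset G h J = conjset G g I) \<longleftrightarrow> (\<exists>g\<in>H. J = conjset G g I)"
proof -
  have hc: "h \<in> carrier G" using subgroup.mem_carrier[OF H h] .
  show ?thesis
  proof
    assume "\<exists>g\<in>H. conjset G h J = conjset G g I"
    then obtain g where g: "g \<in> H" "conjset G h J = conjset G g I" by blast
    have "J = conjset G (inv h) (conjset G h J)" using conjset_inv_conjset[OF J hc] by simp
    also have "\<dots> = conjset G (inv h \<otimes> g) I"
      using g I hc subgroup.mem_carrier[OF H] by (simp add: conjset_conjset)
    moreover have "inv h \<otimes> g \<in> H"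
      using H h g(1) by (simp add: subgroup.m_closed subgroup.m_inv_closed)
    ultimately show "\<exists>g\<in>H. J = conjset G g I" by blast
  next
    assume "\<exists>g\<in>H. J = conjset G g I"
    then obtain g where g: "g \<in> H" "J = conjset G g I" by blast
    then have "conjset G h J = conjset G (h \<otimes> g) I"
      using conjset_conjset[OF I hc subgroup.mem_carrier[OF H g(1)]] by simp
    moreover have "h \<otimes> g \<in> H" using H h g(1) by (simp add: subgroup.m_closed)
    ultimately show "\<exists>g\<in>H. conjset G h J = conjset G g I" by blast
  qed
qed

lemma conj_indicator_Atil:
  assumes H: "subgroup H G" and I: "isub G I H"
  shows "conj_indicator G H I \<in> Atil G H"
  unfolding Atil_def conj_indicator_def mem_Collect_eq
proof (intro conjI allI impI)
  fix J assume "\<not> isub G J H"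
  then have "\<not> (\<exists>h\<in>H. J = conjset G h I)" using isub_conjset[OF I H] by blast
  then show "(if \<exists>h\<in>H. J = conjset G h I then 1 else 0) = (0::int)" by (rule if_not_P)
next
  fix J h assume "isub G J H \<and> h \<in> H"
  then have "J \<subseteq> carrier G" "h \<in> H" using subgroup.subset unfolding isub_def by auto
  from conjugate_conjset_iff[OF H _ this] I subgroup.subset
  have "(\<exists>g\<in>H. conjset G h J = conjset G g I) \<longleftrightarrow> (\<exists>g\<in>H. J = conjset G g I)"
    unfolding isub_def by blast
  then show "(if \<exists>g\<in>H. conjset G h J = conjset G g I then 1 else 0) =
      (if \<exists>g\<in>H. J = conjset G g I then 1 else (0::int))"
    by (simp only:)
qed

lemma conj_indicator_self:
  "subgroup H G \<Longrightarrow> isub G I H \<Longrightarrow> conj_indicator G H I I = 1"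
  using conjset_one[of I] subgroup.one_closed subgroup.subset
  unfolding conj_indicator_def isub_def by metis

lemma conj_indicator_mult:
  assumes H: "subgroup H G" and I: "isub G I H" and b: "b \<in> Atil G H"
  shows "(\<lambda>J. conj_indicator G H I J * b J) = (\<lambda>J. b I * conj_indicator G H I J)"
proof
  fix J
  show "conj_indicator G H I J * b J = b I * conj_indicator G H I J"
  proof (cases "\<exists>h\<in>H. J = conjset G h I")
    case True
    then obtain h where "h \<in> H" "J = conjset G h I" by blast
    then have "b J = b I" using b I unfolding Atil_def by blast
    then show ?thesis by (simp add: conj_indicator_def)
  qed (simp add: conj_indicator_def)
qed

end

lemma tambara_idealD:
  assumes "tambara_ideal G P" "subgroup H G" "subgroup K G" "H \<subseteq> K"
  shows tambara_ideal_res: "b \<in> P K \<Longrightarrow> resG G K H b \<in> P H"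
    and tambara_ideal_tr: "a \<in> P H \<Longrightarrow> trG G K H a \<in> P K"
    and tambara_ideal_nm: "a \<in> P H \<Longrightarrow> nmG G K H a \<in> P K"
proof -
  have "(\<forall>b\<in>P K. resG G K H b \<in> P H) \<and> (\<forall>a\<in>P H. trG G K H a \<in> P K) \<and> (\<forall>a\<in>P H. nmG G K H a \<in> P K)"
    using assms unfolding tambara_ideal_def by simp
  then show "b \<in> P K \<Longrightarrow> resG G K H b \<in> P H" "a \<in> P H \<Longrightarrow> trG G K H a \<in> P K"
    "a \<in> P H \<Longrightarrow> nmG G K H a \<in> P K" by simp_all
qed

lemma tambara_ideal_cj:
  "tambara_ideal G P \<Longrightarrow> g \<in> carrier G \<Longrightarrow> subgroup H G \<Longrightarrow> a \<in> P H
    \<Longrightarrow> cjG G g H a \<in> P (conjset G g H)"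
  unfolding tambara_ideal_def by simp

lemma tambara_ideal_tideal: "tambara_ideal G P \<Longrightarrow> subgroup H G \<Longrightarrow> tideal G H (P H)"
  unfolding tambara_ideal_def by simp

lemma tambara_ideal_Atil: "tambara_ideal G P \<Longrightarrow> subgroup H G \<Longrightarrow> a \<in> P H \<Longrightarrow> a \<in> Atil G H"
  using tambara_ideal_tideal unfolding tideal_def by blast

lemma tambara_ideal_mult:
  "tambara_ideal G P \<Longrightarrow> subgroup H G \<Longrightarrow> a \<in> P H \<Longrightarrow> r \<in> Atil G H
    \<Longrightarrow> (\<lambda>I. r I * a I) \<in> P H"
  using tambara_ideal_tideal unfolding tideal_def by blast

lemma prime_tidealD:
  assumes "prime_tideal G P" "subgroup K1 G" "subgroup K2 G" "a \<in> Atil G K1" "b \<in> Atil G K2"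
    and "\<And>L H1 H2 g1 g2. subgroup L G \<Longrightarrow> subgroup H1 G \<Longrightarrow> subgroup H2 G \<Longrightarrow>
      g1 \<in> carrier G \<Longrightarrow> g2 \<in> carrier G \<Longrightarrow> H1 \<subseteq> K1 \<Longrightarrow> H2 \<subseteq> K2 \<Longrightarrow>
      conjset G g1 H1 \<subseteq> L \<Longrightarrow> conjset G g2 H2 \<subseteq> L \<Longrightarrow>
      (\<lambda>I. nmG G L (conjset G g1 H1) (cjG G g1 H1 (resG G K1 H1 a)) I *
           nmG G L (conjset G g2 H2) (cjG G g2 H2 (resG G K2 H2 b)) I) \<in> P L"
  shows "a \<in> P K1 \<or> b \<in> P K2"
proof -
  have "\<forall>L H1 H2 g1 g2. subgroup L G \<longrightarrow> subgroup H1 G \<longrightarrow> subgroup H2 G \<longrightarrow>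
      g1 \<in> carrier G \<longrightarrow> g2 \<in> carrier G \<longrightarrow> H1 \<subseteq> K1 \<longrightarrow> H2 \<subseteq> K2 \<longrightarrow>
      conjset G g1 H1 \<subseteq> L \<longrightarrow> conjset G g2 H2 \<subseteq> L \<longrightarrow>
      (\<lambda>I. nmG G L (conjset G g1 H1) (cjG G g1 H1 (resG G K1 H1 a)) I *
           nmG G L (conjset G g2 H2) (cjG G g2 H2 (resG G K2 H2 b)) I) \<in> P L"
    using assms(6) by blast
  then show ?thesis using assms(1-5) unfolding prime_tideal_def by simp
qed

(* The subgroups I with p_I = 1 (lemma pI_eq_top_support); the other subgroups form F(P) = F_0. *)
definition top_support :: "('a, 'b) monoid_scheme \<Rightarrow> ('a set \<Rightarrow> ('a set \<Rightarrow> int) set) \<Rightarrow> 'a set set"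
  where "top_support G P = {I. \<exists>b\<in>P (carrier G). b I \<noteq> 0}"

locale prime_tideal_zero_bottom = group G for G (structure) and P +
  assumes finite_carrier: "finite (carrier G)"
    and prime: "prime_tideal G P"
    and bottom_zero: "P {\<one>} = {(\<lambda>I. 0)}"
begin

lemma is_tambara_ideal: "tambara_ideal G P"
  using prime by (simp add: prime_tideal_def)

lemma torsion_free:
  assumes K: "subgroup K G" and a: "a \<in> Atil G K" and n: "n \<noteq> 0"
    and na: "(\<lambda>I. n * a I) \<in> P K"
  shows "a \<in> P K"
proof -
  define b where "b = (\<lambda>I::'a set. if I = {\<one>} then n else 0)"
  have isub_one: "isub G I {\<one>} \<longleftrightarrow> I = {\<one>}" for I
    using triv_subgroup unfolding isub_def by (auto dest: subgroup.one_closed)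
  have b: "b \<in> Atil G {\<one>}" "b \<notin> P {\<one>}"
    using isub_one bottom_zero n by (auto simp: Atil_def b_def conjset_one fun_eq_iff)
  have "(\<lambda>I. nmG G L (conjset G g1 H1) (cjG G g1 H1 (resG G K H1 a)) I *
            nmG G L (conjset G g2 H2) (cjG G g2 H2 (resG G {\<one>} H2 b)) I) \<in> P L"
    if L: "subgroup L G" and H1: "subgroup H1 G" and H2: "subgroup H2 G"
      and g1: "g1 \<in> carrier G" and g2: "g2 \<in> carrier G" and H1K: "H1 \<subseteq> K" and H21: "H2 \<subseteq> {\<one>}"
      and X1L: "conjset G g1 H1 \<subseteq> L" and "conjset G g2 H2 \<subseteq> L"
    for L H1 H2 g1 g2
  proof -
    have H2_one: "H2 = {\<one>}" using H21 subgroup.one_closed[OF H2] by blast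
    then have X2_one: "conjset G g2 H2 = {\<one>}" using g2 by (simp add: conjset_def)
    define X1 where "X1 = conjset G g1 H1"
    define f where "f = cjG G g1 H1 (resG G K H1 a)"
    have X1: "subgroup X1 G" unfolding X1_def using subgroup_conjset[OF H1 g1] .
    have "upc G {\<one>} g2 = {\<one>}" using g2 by (simp add: upc_def conjset_def)
    then have "cjG G g2 H2 (resG G {\<one>} H2 b) {\<one>} = n"
      using X2_one isub_one unfolding cjG_def resG_def H2_one by (simp add: b_def)
    then obtain r where r: "r \<in> Atil G L" and eq:
      "(\<lambda>J. nmG G L X1 f J * nmG G L {\<one>} (cjG G g2 H2 (resG G {\<one>} H2 b)) J)
        = (\<lambda>J. r J * nmG G L X1 (\<lambda>I. n * f I) J)"
      using nmG_mult_nmG_trivial[OF finite_carrier L subgroup.subset[OF X1]] by blast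
    have "(\<lambda>I. n * f I) = cjG G g1 H1 (resG G K H1 (\<lambda>I. n * a I))"
      unfolding f_def by (auto simp: cjG_def resG_def)
    moreover have "resG G K H1 (\<lambda>I. n * a I) \<in> P H1"
      using tambara_ideal_res[OF is_tambara_ideal H1 K H1K na] .
    ultimately have "(\<lambda>I. n * f I) \<in> P X1"
      unfolding X1_def using tambara_ideal_cj[OF is_tambara_ideal g1 H1] by simp
    then have "nmG G L X1 (\<lambda>I. n * f I) \<in> P L"
      using tambara_ideal_nm[OF is_tambara_ideal X1 L] X1L unfolding X1_def by blast
    then show ?thesis
      using tambara_ideal_mult[OF is_tambara_ideal L _ r] eq unfolding X1_def f_def X2_one by simp
  qed
  then have "a \<in> P K \<or> b \<in> P {\<one>}"
    by (rule prime_tidealD[OF prime K triv_subgroup a b(1)])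
  with b(2) show ?thesis by blast
qed

lemma conj_indicator_mem:
  assumes I: "subgroup I G" and "I \<in> top_support G P"
  shows "conj_indicator G (carrier G) I \<in> P (carrier G)"
proof -
  obtain b where b: "b \<in> P (carrier G)" "b I \<noteq> 0"
    using assms(2) unfolding top_support_def by blast
  have I': "isub G I (carrier G)" using I isub_carrier_iff by blast
  have "(\<lambda>J. conj_indicator G (carrier G) I J * b J) \<in> P (carrier G)"
    using tambara_ideal_mult[OF is_tambara_ideal subgroup_self b(1) conj_indicator_Atil[OF subgroup_self I']] .
  then have "(\<lambda>J. b I * conj_indicator G (carrier G) I J) \<in> P (carrier G)"
    using conj_indicator_mult[OF subgroup_self I' tambara_ideal_Atil[OF is_tambara_ideal subgroup_self b(1)]]
    by simp
  then show ?thesis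
    using torsion_free[OF subgroup_self conj_indicator_Atil[OF subgroup_self I'] b(2)] by blast
qed

lemma pI_eq_top_support:
  assumes "subgroup I G"
  shows "pI G P I = (if I \<in> top_support G P then 1 else 0)"
proof (cases "I \<in> top_support G P")
  case True
  have "conj_indicator G (carrier G) I I = 1"
    using conj_indicator_self[OF subgroup_self] assms isub_carrier_iff by blast
  then have "1 \<in> {a I | a. a \<in> P (carrier G)}" using conj_indicator_mem[OF assms True] by force
  then show ?thesis using True unfolding pI_def by (simp add: Gcd_1)
next
  case False
  then show ?thesis unfolding pI_def top_support_def by auto
qed

lemma coord_in_top_support:
  assumes H: "subgroup H G" and a: "a \<in> P H" and I: "isub G I H" and aI: "a I \<noteq> 0"
  shows "I \<in> top_support G P"
proof -
  have Is: "subgroup I G" and IH: "I \<subseteq> H" using I unfolding isub_def by auto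
  have II: "isub G I I" using Is by (simp add: isub_def)
  define e where "e = conj_indicator G I I"
  have eA: "e \<in> Atil G I" unfolding e_def using conj_indicator_Atil[OF Is II] .
  have res: "resG G H I a \<in> P I" using tambara_ideal_res[OF is_tambara_ideal Is H IH a] .
  have "(\<lambda>J. e J * resG G H I a J) \<in> P I" using tambara_ideal_mult[OF is_tambara_ideal Is res eA] .
  also have "(\<lambda>J. e J * resG G H I a J) = (\<lambda>J. resG G H I a I * e J)"
    unfolding e_def using conj_indicator_mult[OF Is II tambara_ideal_Atil[OF is_tambara_ideal Is res]] .
  also have "resG G H I a I = a I" using II by (simp add: resG_def)
  finally have "e \<in> P I" by (rule torsion_free[OF Is eA aI])
  then have "trG G (carrier G) I e \<in> P (carrier G)"
    using tambara_ideal_tr[OF is_tambara_ideal Is subgroup_self subgroup.subset[OF Is]] by blast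
  moreover have "0 < trG G (carrier G) I e I"
  proof (rule trG_at_self_pos[OF finite_carrier subgroup_self])
    show "isub G I (carrier G)" using Is isub_carrier_iff by blast
    show "0 \<le> e J" for J by (simp add: e_def conj_indicator_def)
    show "0 < e I" using conj_indicator_self[OF Is II] by (simp add: e_def)
  qed
  ultimately have "trG G (carrier G) I e \<in> P (carrier G) \<and> trG G (carrier G) I e I \<noteq> 0"
    by simp
  then show ?thesis unfolding top_support_def by blast
qed

lemma top_support_conjset:
  assumes "subgroup J G" "h \<in> carrier G"
  shows "conjset G h J \<in> top_support G P \<longleftrightarrow> J \<in> top_support G P"
proof -
  have inv: "b (conjset G h J) = b J" if "b \<in> P (carrier G)" for b
    using tambara_ideal_Atil[OF is_tambara_ideal subgroup_self that] assms isub_carrier_iff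
    unfolding Atil_def by blast
  show ?thesis unfolding top_support_def mem_Collect_eq using inv by metis
qed

lemma top_support_indicator_mem:
  assumes P_top: "P (carrier G) = {a \<in> Atil G (carrier G). \<forall>I. isub G I (carrier G) \<longrightarrow> p I dvd a I}"
  shows "(\<lambda>J. if isub G J (carrier G) \<and> J \<in> top_support G P then 1 else 0) \<in> P (carrier G)"
    (is "?Z \<in> _")
proof -
  have "?Z \<in> Atil G (carrier G)"
    using isub_conjset[OF _ subgroup_self] top_support_conjset isub_carrier_iff
    unfolding Atil_def by simp
  moreover have "p I dvd ?Z I" if I: "isub G I (carrier G)" for I
  proof (cases "I \<in> top_support G P")
    case True
    have "subgroup I G" using I isub_carrier_iff by blast
    then have "p I dvd conj_indicator G (carrier G) I I"
      using conj_indicator_mem True I P_top by blast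
    then show ?thesis using conj_indicator_self[OF subgroup_self I] True I by simp
  qed simp
  ultimately show ?thesis using P_top by blast
qed

lemma P_subset_Pideal:
  assumes H: "subgroup H G"
  shows "P H \<subseteq> Pideal G {I. isub G I (carrier G) \<and> I \<notin> top_support G P} 0 H"
proof
  fix a assume a: "a \<in> P H"
  have "a I = 0" if "isub G I H" "I \<notin> top_support G P" for I
    using coord_in_top_support[OF H a] that by blast
  then show "a \<in> Pideal G {I. isub G I (carrier G) \<and> I \<notin> top_support G P} 0 H"
    unfolding Pideal_def using tambara_ideal_Atil[OF is_tambara_ideal H a] by auto
qed

lemma Pideal_subset_P:
  assumes P_top: "P (carrier G) = {a \<in> Atil G (carrier G). \<forall>I. isub G I (carrier G) \<longrightarrow> p I dvd a I}"
    and H: "subgroup H G"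
  shows "Pideal G {I. isub G I (carrier G) \<and> I \<notin> top_support G P} 0 H \<subseteq> P H"
proof
  define Z where "Z = (\<lambda>J. if isub G J (carrier G) \<and> J \<in> top_support G P then 1 else (0::int))"
  fix a assume a: "a \<in> Pideal G {I. isub G I (carrier G) \<and> I \<notin> top_support G P} 0 H"
  then have aA: "a \<in> Atil G H" unfolding Pideal_def by blast
  have a0: "a I = 0" if "isub G I H" "I \<notin> top_support G P" for I
  proof -
    have "isub G I (carrier G)" using that(1) isub_carrier_iff unfolding isub_def by blast
    then show ?thesis using a that unfolding Pideal_def by auto
  qed
  have "resG G (carrier G) H Z \<in> P H"
    using tambara_ideal_res[OF is_tambara_ideal H subgroup_self subgroup.subset[OF H]]
      top_support_indicator_mem[OF P_top] unfolding Z_def by blast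
  then have "(\<lambda>J. a J * resG G (carrier G) H Z J) \<in> P H"
    using tambara_ideal_mult[OF is_tambara_ideal H _ aA] by blast
  moreover have "a J * resG G (carrier G) H Z J = a J" for J
  proof (cases "isub G J H \<and> J \<in> top_support G P")
    case True
    then have "isub G J (carrier G)" using isub_carrier_iff unfolding isub_def by blast
    then show ?thesis using True by (simp add: resG_def Z_def)
  next
    case False
    then have "a J = 0" using a0 aA unfolding Atil_def by blast
    then show ?thesis by simp
  qed
  ultimately show "a \<in> P H" by simp
qed

end

theorem proposition4p12:
  fixes G :: "('a, 'b) monoid_scheme" and P :: "'a set \<Rightarrow> ('a set \<Rightarrow> int) set"
  assumes "group G" and "finite (carrier G)"
    and "prime_tideal G P"
    and "P {\<one>\<^bsub>G\<^esub>} = {(\<lambda>I. 0)}"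
    and "\<exists>p :: 'a set \<Rightarrow> int. P (carrier G) =
           {a \<in> Atil G (carrier G). \<forall>I. isub G I (carrier G) \<longrightarrow> p I dvd a I}"
  shows "{I. isub G I (carrier G) \<and> pI G P I \<noteq> 1} = {I. isub G I (carrier G) \<and> pI G P I = 0}
    \<and> (\<forall>H. subgroup H G \<longrightarrow>
          P H = Pideal G {I. isub G I (carrier G) \<and> pI G P I \<noteq> 1} 0 H)"
proof -
  interpret prime_tideal_zero_bottom G P
    using assms(1-4) by (simp add: prime_tideal_zero_bottom_def prime_tideal_zero_bottom_axioms_def)
  obtain p where P_top:
    "P (carrier G) = {a \<in> Atil G (carrier G). \<forall>I. isub G I (carrier G) \<longrightarrow> p I dvd a I}"
    using assms(5) by blast
  have "pI G P I = (if I \<in> top_support G P then 1 else 0)" if "isub G I (carrier G)" for I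
    using pI_eq_top_support isub_carrier_iff that by blast
  then have F_support: "{I. isub G I (carrier G) \<and> pI G P I \<noteq> 1}
      = {I. isub G I (carrier G) \<and> I \<notin> top_support G P}"
    and F_zero: "{I. isub G I (carrier G) \<and> pI G P I \<noteq> 1} = {I. isub G I (carrier G) \<and> pI G P I = 0}"
    by auto
  have "P H = Pideal G {I. isub G I (carrier G) \<and> I \<notin> top_support G P} 0 H"
    if "subgroup H G" for H
    using P_subset_Pideal[OF that] Pideal_subset_P[OF P_top that] by (rule subset_antisym)
  then show ?thesis using F_zero F_support by simp
qed

end
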